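(* In a PL+C model, suppose $\sum_{h\in\mathcal U}p_h\ge\alpha k$ for some $\alpha>1$. Then for every $i\in\mathcal U$, $$p_i\le\frac{\sum_{j\in\mathcal U}\exp(u_j)}{\exp(u_i)}\cdot\left(\Pr_{PLC}(\mathcal R_{i=1})+\frac{k(\alpha e^{1-\alpha})^k}{1-(\alpha e^{1-\alpha})^k}\right).$$
   Context: PL+C model: universe $\mathcal U=\{1,\dots,n\}$, fixed ranking length $k\le n$. Each item $h$ has a utility $u_h\in\mathbb R$ and a consideration probability $p_h\in(0,1]$. A consideration set $C$ is drawn by including each item independently with probability $p_h$, conditioned on $|C|\ge k$: $\Pr_C(C)=\frac{1}{z_{k,p}}\prod_{h\in C}p_h\prod_{h\notin C}(1-p_h)$ for $|C|\ge k$ (with $z_{k,p}$ the normalizing constant), and $0$ otherwise. Given $C$, a length-$k$ ranking $r$ has probability $\Pr_{PL}(r\mid C)=\prod_{t=1}^k \frac{\exp(u_{r_t})}{\sum_{h\in C\setminus\{r_1,\dots,r_{t-1}\}}\exp(u_h)}$ if all $r_t\in C$, else $0$. $\Pr_{PLC}(r)=\sum_C\Pr_C(C)\Pr_{PL}(r\mid C)$, and for a set $R$ of rankings $\Pr_{PLC}(R)=\sum_{r\in R}\Pr_{PLC}(r)$. $\mathcal R_{i=1}$ is the set of length-$k$ rankings with $i$ in the first position. *)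

theory Defs
  imports Complex_Main
begin

definition universe :: "nat \<Rightarrow> nat set" where
  "universe n = {1..n}"

definition cweight :: "nat \<Rightarrow> (nat \<Rightarrow> real) \<Rightarrow> nat set \<Rightarrow> real" where
  "cweight n p C = (\<Prod>h\<in>C. p h) * (\<Prod>h\<in>universe n - C. 1 - p h)"

definition zkp :: "nat \<Rightarrow> nat \<Rightarrow> (nat \<Rightarrow> real) \<Rightarrow> real" where
  "zkp n k p = (\<Sum>C\<in>{C. C \<subseteq> universe n \<and> k \<le> card C}. cweight n p C)"

definition PrC :: "nat \<Rightarrow> nat \<Rightarrow> (nat \<Rightarrow> real) \<Rightarrow> nat set \<Rightarrow> real" where
  "PrC n k p C = (if C \<subseteq> universe n \<and> k \<le> card C then cweight n p C / zkp n k p else 0)"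

definition PrPL :: "(nat \<Rightarrow> real) \<Rightarrow> nat set \<Rightarrow> nat list \<Rightarrow> real" where
  "PrPL u C r = (if set r \<subseteq> C then
      (\<Prod>t<length r. exp (u (r ! t)) / (\<Sum>h\<in>C - set (take t r). exp (u h)))
    else 0)"

definition rankings :: "nat \<Rightarrow> nat \<Rightarrow> nat list set" where
  "rankings n k = {r. length r = k \<and> distinct r \<and> set r \<subseteq> universe n}"

definition PrPLC :: "nat \<Rightarrow> nat \<Rightarrow> (nat \<Rightarrow> real) \<Rightarrow> (nat \<Rightarrow> real) \<Rightarrow> nat list \<Rightarrow> real" where
  "PrPLC n k p u r = (\<Sum>C\<in>Pow (universe n). PrC n k p C * PrPL u C r)"

definition PrPLC_set :: "nat \<Rightarrow> nat \<Rightarrow> (nat \<Rightarrow> real) \<Rightarrow> (nat \<Rightarrow> real) \<Rightarrow> nat list set \<Rightarrow> real" where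
  "PrPLC_set n k p u R = (\<Sum>r\<in>R. PrPLC n k p u r)"

definition R_first :: "nat \<Rightarrow> nat \<Rightarrow> nat \<Rightarrow> nat list set" where
  "R_first n k i = {r \<in> rankings n k. r ! 0 = i}"

end

theory Submission
  imports Defs
begin

(* Let C be drawn by the independent inclusions, without conditioning on |C| >= k. Then
   p i = Pr(i : C) <= Pr(i : C and |C| >= k) + Pr(|C| < k).
   Conditioning on |C| >= k only raises the probability of each such C, and given C containing i,
   Plackett-Luce ranks i first with probability exp(u i) / (sum over C of exp u), which is at least
   exp(u i) / (sum over the universe of exp u); this bounds the first term by the first-place
   probability under PL+C, scaled by (sum of exp u) / exp(u i). The second term is a lower tail of
   a sum of independent Bernoulli variables, at most (alpha exp(1 - alpha))^k by the Chernoff bound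
   for E[alpha^(k - |C|)]. *)

definition pl_prob :: "('a \<Rightarrow> real) \<Rightarrow> 'a set \<Rightarrow> 'a list \<Rightarrow> real" where
  "pl_prob w D r = (\<Prod>t<length r. w (r ! t) / (\<Sum>h\<in>D - set (take t r). w h))"

lemma pl_prob_Cons: "pl_prob w D (x # r) = w x / (\<Sum>h\<in>D. w h) * pl_prob w (D - {x}) r"
proof -
  have "D - set (take (Suc t) (x # r)) = D - {x} - set (take t r)" for t
    by auto
  then show ?thesis
    unfolding pl_prob_def length_Cons prod.lessThan_Suc_shift by simp
qed

lemma pl_prob_nonneg: "(\<And>h. 0 \<le> w h) \<Longrightarrow> 0 \<le> pl_prob w D r"
  unfolding pl_prob_def by (intro prod_nonneg divide_nonneg_nonneg sum_nonneg) auto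

lemma distinct_lists_Suc_eq:
  "{r. length r = Suc m \<and> distinct r \<and> set r \<subseteq> D} =
   (\<lambda>(x, r). x # r) ` (SIGMA x:D. {r. length r = m \<and> distinct r \<and> set r \<subseteq> D - {x}})"
proof (intro set_eqI iffI)
  fix r assume "r \<in> {r. length r = Suc m \<and> distinct r \<and> set r \<subseteq> D}"
  then show "r \<in> (\<lambda>(x, r). x # r) ` (SIGMA x:D. {r. length r = m \<and> distinct r \<and> set r \<subseteq> D - {x}})"
    by (cases r) (auto intro!: image_eqI[where x="(hd r, tl r)"])
qed auto

lemma finite_distinct_lists: "finite D \<Longrightarrow> finite {r. length r = m \<and> distinct r \<and> set r \<subseteq> D}"
  by (rule finite_subset[OF _ finite_lists_length_eq[of D m]]) auto

lemma sum_pl_prob_distinct_lists: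
  assumes "finite D" "m \<le> card D" "\<And>h. h \<in> D \<Longrightarrow> 0 < w h"
  shows "(\<Sum>r\<in>{r. length r = m \<and> distinct r \<and> set r \<subseteq> D}. pl_prob w D r) = 1"
  using assms
proof (induction m arbitrary: D)
  case 0
  have "{r. length r = 0 \<and> distinct r \<and> set r \<subseteq> D} = {[]}"
    by auto
  then show ?case
    by (simp add: pl_prob_def)
next
  case (Suc m)
  define L where "L x = {r. length r = m \<and> distinct r \<and> set r \<subseteq> D - {x}}" for x
  have "D \<noteq> {}"
    using Suc.prems by auto
  then have W_pos: "0 < (\<Sum>h\<in>D. w h)"
    using Suc.prems by (simp add: sum_pos)
  have inj: "inj_on (\<lambda>(x, r). x # r) (Sigma D L)"
    by (auto simp: inj_on_def)
  have "(\<Sum>r\<in>{r. length r = Suc m \<and> distinct r \<and> set r \<subseteq> D}. pl_prob w D r)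
      = (\<Sum>(x, r)\<in>Sigma D L. pl_prob w D (x # r))"
    unfolding distinct_lists_Suc_eq L_def[symmetric] sum.reindex[OF inj]
    by (simp add: case_prod_unfold)
  also have "\<dots> = (\<Sum>x\<in>D. \<Sum>r\<in>L x. w x / (\<Sum>h\<in>D. w h) * pl_prob w (D - {x}) r)"
    unfolding pl_prob_Cons
    by (rule sum.Sigma[symmetric]) (use Suc.prems in \<open>auto simp: L_def intro: finite_distinct_lists\<close>)
  also have "\<dots> = (\<Sum>x\<in>D. w x / (\<Sum>h\<in>D. w h))"
  proof (rule sum.cong[OF refl])
    fix x assume "x \<in> D"
    then have "(\<Sum>r\<in>L x. pl_prob w (D - {x}) r) = 1"
      unfolding L_def using Suc.prems by (intro Suc.IH) auto
    then show "(\<Sum>r\<in>L x. w x / (\<Sum>h\<in>D. w h) * pl_prob w (D - {x}) r) = w x / (\<Sum>h\<in>D. w h)"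
      by (simp only: sum_distrib_left[symmetric] mult_1_right)
  qed
  also have "\<dots> = 1"
    using W_pos by (simp add: sum_divide_distrib[symmetric])
  finally show ?case .
qed

definition bernoulli_weight :: "'a set \<Rightarrow> ('a \<Rightarrow> real) \<Rightarrow> 'a set \<Rightarrow> real" where
  "bernoulli_weight U p C = (\<Prod>h\<in>C. p h) * (\<Prod>h\<in>U - C. 1 - p h)"

lemma bernoulli_weight_nonneg:
  "C \<subseteq> U \<Longrightarrow> (\<And>h. h \<in> U \<Longrightarrow> 0 \<le> p h \<and> p h \<le> 1) \<Longrightarrow> 0 \<le> bernoulli_weight U p C"
  unfolding bernoulli_weight_def by (intro mult_nonneg_nonneg prod_nonneg) auto

lemma sum_bernoulli_weight_power_card:
  assumes "finite U"
  shows "(\<Sum>C\<in>Pow U. bernoulli_weight U p C * t ^ card C) = (\<Prod>h\<in>U. 1 - (1 - t) * p h)"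
proof -
  have "(\<Prod>h\<in>C. t * p h) = t ^ card C * (\<Prod>h\<in>C. p h)" if "C \<in> Pow U" for C
    by (simp add: prod.distrib)
  then have "(\<Sum>C\<in>Pow U. bernoulli_weight U p C * t ^ card C)
      = (\<Sum>C\<in>Pow U. (\<Prod>h\<in>C. t * p h) * (\<Prod>h\<in>U - C. 1 - p h))"
    by (auto simp: bernoulli_weight_def mult_ac intro!: sum.cong)
  also have "\<dots> = (\<Prod>h\<in>U. t * p h + (1 - p h))"
    by (rule prod_add[symmetric, OF assms])
  finally show ?thesis
    by (simp add: algebra_simps)
qed

lemma sum_bernoulli_weight: "finite U \<Longrightarrow> (\<Sum>C\<in>Pow U. bernoulli_weight U p C) = 1"
  using sum_bernoulli_weight_power_card[of U p 1] by simp

lemma sum_bernoulli_weight_mem: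
  assumes "finite U" "i \<in> U"
  shows "(\<Sum>C\<in>Pow U. if i \<in> C then bernoulli_weight U p C else 0) = p i"
proof -
  \<comment> \<open>Expanding the product of the p h + q h keeps exactly the sets containing i, as q i = 0.\<close>
  define q where "q h = (if h = i then 0 else 1 - p h)" for h
  have "(\<Prod>h\<in>C. p h) * (\<Prod>h\<in>U - C. q h) = (if i \<in> C then bernoulli_weight U p C else 0)"
    if "C \<in> Pow U" for C
    using assms by (auto simp: bernoulli_weight_def q_def intro!: prod.cong prod_zero)
  then have "(\<Sum>C\<in>Pow U. if i \<in> C then bernoulli_weight U p C else 0) = (\<Prod>h\<in>U. p h + q h)"
    by (simp add: prod_add[OF assms(1)])
  also have "\<dots> = (\<Prod>h\<in>U. if h = i then p i else 1)"
    by (rule prod.cong) (auto simp: q_def)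
  also have "\<dots> = p i"
    using assms by (simp add: prod.delta)
  finally show ?thesis .
qed

lemma prod_one_minus_le_exp_neg_sum:
  fixes x :: "'a \<Rightarrow> real"
  assumes "\<And>h. h \<in> U \<Longrightarrow> x h \<le> 1"
  shows "(\<Prod>h\<in>U. 1 - x h) \<le> exp (- (\<Sum>h\<in>U. x h))"
proof (cases "finite U")
  case True
  have "(\<Prod>h\<in>U. 1 - x h) \<le> (\<Prod>h\<in>U. exp (- x h))"
  proof (rule prod_mono)
    fix h assume "h \<in> U"
    then show "0 \<le> 1 - x h \<and> 1 - x h \<le> exp (- x h)"
      using assms exp_ge_add_one_self[of "- x h"] by simp
  qed
  then show ?thesis
    by (simp add: exp_sum[OF True, symmetric] sum_negf)
qed simp

lemma mult_exp_one_minus_less_one: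
  fixes a :: real
  assumes "1 < a"
  shows "a * exp (1 - a) < 1"
proof -
  have "ln a < a - 1"
    using ln_add_one_self_less_self[of "a - 1"] assms by simp
  then have "a < exp (a - 1)"
    using assms by (metis exp_less_cancel_iff exp_ln less_trans zero_less_one)
  then show ?thesis
    by (simp add: exp_diff field_simps)
qed

lemma bernoulli_lower_tail:
  assumes "finite U" and p: "\<And>h. h \<in> U \<Longrightarrow> 0 \<le> p h \<and> p h \<le> 1"
    and "1 < a" and mean: "a * real k \<le> (\<Sum>h\<in>U. p h)"
  shows "(\<Sum>C\<in>Pow U. if card C < k then bernoulli_weight U p C else 0) \<le> (a * exp (1 - a)) ^ k"
proof -
  \<comment> \<open>Markov's inequality applied to a ^ (k - card C).\<close>
  define t where "t = 1 / a"
  have t: "0 < t" "t < 1" "a * t = 1"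
    using \<open>1 < a\<close> by (auto simp: t_def)
  have markov: "(if card C < k then bernoulli_weight U p C else 0)
      \<le> a ^ k * (bernoulli_weight U p C * t ^ card C)" if "C \<in> Pow U" for C
  proof -
    have w: "0 \<le> bernoulli_weight U p C"
      using that p by (intro bernoulli_weight_nonneg) auto
    show ?thesis
    proof (cases "card C < k")
      case True
      then have "a ^ card C \<le> a ^ k"
        using \<open>1 < a\<close> by (intro power_increasing) auto
      then have "1 \<le> a ^ k * t ^ card C"
        using \<open>1 < a\<close> by (simp add: t_def power_divide)
      then show ?thesis
        using True mult_left_mono[OF _ w] by (fastforce simp: mult_ac)
    qed (use w t \<open>1 < a\<close> in simp)
  qed
  have "(\<Sum>C\<in>Pow U. if card C < k then bernoulli_weight U p C else 0)
      \<le> a ^ k * (\<Sum>C\<in>Pow U. bernoulli_weight U p C * t ^ card C)"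
    unfolding sum_distrib_left by (intro sum_mono markov)
  also have "\<dots> = a ^ k * (\<Prod>h\<in>U. 1 - (1 - t) * p h)"
    by (simp add: sum_bernoulli_weight_power_card[OF \<open>finite U\<close>])
  also have "\<dots> \<le> a ^ k * exp (- (\<Sum>h\<in>U. (1 - t) * p h))"
    by (intro mult_left_mono prod_one_minus_le_exp_neg_sum) (use p t \<open>1 < a\<close> in \<open>auto simp: mult_le_one\<close>)
  also have "\<dots> \<le> a ^ k * exp (- ((1 - t) * (a * real k)))"
    using mean t \<open>1 < a\<close> by (auto simp: sum_distrib_left[symmetric] intro!: mult_left_mono)
  also have "\<dots> = (a * exp (1 - a)) ^ k"
    using t by (simp add: power_mult_distrib exp_of_nat_mult[symmetric] algebra_simps)
  finally show ?thesis .
qed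

lemma cweight_eq_bernoulli_weight: "cweight n p = bernoulli_weight (universe n) p"
  by (simp add: fun_eq_iff cweight_def bernoulli_weight_def)

lemma cweight_nonneg:
  assumes "\<forall>h\<in>universe n. 0 < p h \<and> p h \<le> 1" "C \<subseteq> universe n"
  shows "0 \<le> cweight n p C"
  unfolding cweight_eq_bernoulli_weight using assms by (intro bernoulli_weight_nonneg) auto

lemma PrPL_eq_pl_prob: "PrPL u C r = (if set r \<subseteq> C then pl_prob (\<lambda>h. exp (u h)) C r else 0)"
  unfolding PrPL_def pl_prob_def by simp

lemma PrPL_nonneg: "0 \<le> PrPL u C r"
  unfolding PrPL_eq_pl_prob by (auto intro: pl_prob_nonneg)

lemma finite_R_first: "finite (R_first n k i)"
  unfolding R_first_def rankings_def
  by (rule finite_subset[OF _ finite_distinct_lists[of "universe n" k]]) (auto simp: universe_def)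

lemma PrPL_R_first_ge:
  assumes "C \<subseteq> universe n" "i \<in> C" "k \<le> card C" "1 \<le> k"
  shows "exp (u i) / (\<Sum>h\<in>C. exp (u h)) \<le> (\<Sum>r\<in>R_first n k i. PrPL u C r)"
proof -
  define L where "L = {r. length r = k - 1 \<and> distinct r \<and> set r \<subseteq> C - {i}}"
  have "finite C"
    using assms(1) finite_subset by (auto simp: universe_def)
  have "(Cons i) ` L \<subseteq> R_first n k i"
    using assms unfolding L_def R_first_def rankings_def by (auto simp: subset_iff)
  then have "(\<Sum>r\<in>L. PrPL u C (i # r)) \<le> (\<Sum>r\<in>R_first n k i. PrPL u C r)"
    using sum_mono2[OF finite_R_first, of "(Cons i) ` L" n k i "PrPL u C"]
    by (simp add: PrPL_nonneg sum.reindex)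
  moreover have "(\<Sum>r\<in>L. PrPL u C (i # r))
      = exp (u i) / (\<Sum>h\<in>C. exp (u h)) * (\<Sum>r\<in>L. pl_prob (\<lambda>h. exp (u h)) (C - {i}) r)"
    using assms(2) by (auto simp: sum_distrib_left L_def PrPL_eq_pl_prob pl_prob_Cons intro!: sum.cong)
  moreover have "(\<Sum>r\<in>L. pl_prob (\<lambda>h. exp (u h)) (C - {i}) r) = 1"
    unfolding L_def by (rule sum_pl_prob_distinct_lists) (use assms \<open>finite C\<close> in auto)
  ultimately show ?thesis
    by simp
qed

lemma zkp_pos:
  assumes "k \<le> n" "\<forall>h\<in>universe n. 0 < p h \<and> p h \<le> 1"
  shows "0 < zkp n k p"
proof -
  have "0 < cweight n p (universe n)"
    using assms by (simp add: cweight_def prod_pos)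
  also have "\<dots> \<le> zkp n k p"
    unfolding zkp_def using assms
    by (intro member_le_sum) (auto simp: cweight_nonneg universe_def)
  finally show ?thesis .
qed

lemma zkp_le_one:
  assumes "\<forall>h\<in>universe n. 0 < p h \<and> p h \<le> 1"
  shows "zkp n k p \<le> 1"
proof -
  have "zkp n k p \<le> (\<Sum>C\<in>Pow (universe n). bernoulli_weight (universe n) p C)"
    unfolding zkp_def cweight_eq_bernoulli_weight using assms
    by (intro sum_mono2) (auto simp: universe_def intro!: bernoulli_weight_nonneg)
  also have "\<dots> = 1"
    by (simp add: sum_bernoulli_weight universe_def)
  finally show ?thesis .
qed

lemma cweight_le_PrC:
  assumes "k \<le> n" "\<forall>h\<in>universe n. 0 < p h \<and> p h \<le> 1" "C \<subseteq> universe n" "k \<le> card C"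
  shows "cweight n p C \<le> PrC n k p C"
proof -
  show ?thesis
    using assms cweight_nonneg[OF assms(2,3)] zkp_pos[of k n p] zkp_le_one[of n p k]
    by (simp add: PrC_def le_divide_eq mult_left_le)
qed

lemma PrC_nonneg:
  assumes "k \<le> n" "\<forall>h\<in>universe n. 0 < p h \<and> p h \<le> 1"
  shows "0 \<le> PrC n k p C"
  using assms zkp_pos[of k n p] by (auto simp: PrC_def cweight_nonneg)

lemma PrPLC_set_eq_sum_PrC:
  "PrPLC_set n k p u R = (\<Sum>C\<in>Pow (universe n). PrC n k p C * (\<Sum>r\<in>R. PrPL u C r))"
  unfolding PrPLC_set_def PrPLC_def sum_distrib_left by (rule sum.swap)

lemma PrPLC_set_R_first_ge:
  assumes "1 \<le> k" "k \<le> n" and p: "\<forall>h\<in>universe n. 0 < p h \<and> p h \<le> 1" and "i \<in> universe n"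
  shows "exp (u i) / (\<Sum>j\<in>universe n. exp (u j))
           * (\<Sum>C\<in>Pow (universe n). if k \<le> card C \<and> i \<in> C then cweight n p C else 0)
         \<le> PrPLC_set n k p u (R_first n k i)"
  unfolding PrPLC_set_eq_sum_PrC sum_distrib_left[where r = "exp (u i) / (\<Sum>j\<in>universe n. exp (u j))"]
proof (rule sum_mono)
  fix C assume C: "C \<in> Pow (universe n)"
  let ?S = "\<Sum>j\<in>universe n. exp (u j)" and ?S\<^sub>C = "\<Sum>h\<in>C. exp (u h)"
  have first_nonneg: "0 \<le> (\<Sum>r\<in>R_first n k i. PrPL u C r)"
    by (intro sum_nonneg PrPL_nonneg)
  show "exp (u i) / ?S * (if k \<le> card C \<and> i \<in> C then cweight n p C else 0)
        \<le> PrC n k p C * (\<Sum>r\<in>R_first n k i. PrPL u C r)"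
  proof (cases "k \<le> card C \<and> i \<in> C")
    case True
    have "finite C"
      using C finite_subset by (auto simp: universe_def)
    then have "0 < ?S\<^sub>C" "?S\<^sub>C \<le> ?S"
      using C True by (auto simp: universe_def intro!: sum_pos sum_mono2)
    then have "exp (u i) / ?S \<le> exp (u i) / ?S\<^sub>C"
      by (intro divide_left_mono mult_pos_pos) auto
    also have "\<dots> \<le> (\<Sum>r\<in>R_first n k i. PrPL u C r)"
      using C True assms(1) by (intro PrPL_R_first_ge) auto
    finally have "exp (u i) / ?S * cweight n p C \<le> (\<Sum>r\<in>R_first n k i. PrPL u C r) * PrC n k p C"
      using C True assms first_nonneg
      by (intro mult_mono cweight_le_PrC) (auto simp: cweight_nonneg)
    then show ?thesis
      using True by (simp add: mult.commute)
  qed (use first_nonneg PrC_nonneg[OF assms(2) p] in auto)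
qed

lemma consideration_prob_le:
  assumes "1 \<le> k" "k \<le> n" and p: "\<forall>h\<in>universe n. 0 < p h \<and> p h \<le> 1" and i: "i \<in> universe n"
  shows "p i \<le> (\<Sum>j\<in>universe n. exp (u j)) / exp (u i) *
           (PrPLC_set n k p u (R_first n k i)
            + (\<Sum>C\<in>Pow (universe n). if card C < k then cweight n p C else 0))"
    (is "_ \<le> ?S / _ * (?P + ?T)")
proof -
  let ?P' = "\<Sum>C\<in>Pow (universe n). if k \<le> card C \<and> i \<in> C then cweight n p C else 0"
  have fin: "finite (universe n)"
    by (simp add: universe_def)
  have T_nonneg: "0 \<le> ?T"
    using cweight_nonneg[OF p] by (intro sum_nonneg) auto
  have "exp (u i) \<le> ?S"
    using fin i by (intro member_le_sum) auto
  then have ratio: "1 \<le> ?S / exp (u i)" and S_pos: "0 < ?S"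
    using exp_gt_zero[of "u i"] by (simp, linarith)
  have "p i = (\<Sum>C\<in>Pow (universe n). if i \<in> C then cweight n p C else 0)"
    unfolding cweight_eq_bernoulli_weight by (rule sum_bernoulli_weight_mem[OF fin i, symmetric])
  also have "\<dots> \<le> ?P' + ?T"
    unfolding sum.distrib[symmetric] by (intro sum_mono) (auto simp: cweight_nonneg[OF p])
  also have "?P' \<le> ?S / exp (u i) * ?P"
    using PrPLC_set_R_first_ge[OF assms, of u] S_pos by (simp add: field_simps)
  also have "?T \<le> ?S / exp (u i) * ?T"
    using mult_right_mono[OF ratio T_nonneg] by simp
  finally show ?thesis
    by (simp add: distrib_left)
qed

theorem theorem6:
  fixes n k :: nat and u p :: "nat \<Rightarrow> real" and \<alpha> :: real and i :: nat
  assumes "1 \<le> k" and "k \<le> n"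
    and "\<forall>h\<in>universe n. 0 < p h \<and> p h \<le> 1"
    and "\<alpha> > 1"
    and "(\<Sum>h\<in>universe n. p h) \<ge> \<alpha> * real k"
    and "i \<in> universe n"
  shows "p i \<le> (\<Sum>j\<in>universe n. exp (u j)) / exp (u i) *
           (PrPLC_set n k p u (R_first n k i)
            + real k * (\<alpha> * exp (1 - \<alpha>)) ^ k / (1 - (\<alpha> * exp (1 - \<alpha>)) ^ k))"
proof -
  \<comment> \<open>The tail is in fact bounded by q alone, which is at most the term k q / (1 - q) of the statement.\<close>
  define q where "q = (\<alpha> * exp (1 - \<alpha>)) ^ k"
  have "0 < q" "q < 1"
    using mult_exp_one_minus_less_one[OF assms(4)] assms(1,4) by (auto simp: q_def power_less_one_iff)
  have "(\<Sum>C\<in>Pow (universe n). if card C < k then cweight n p C else 0) \<le> q"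
    unfolding q_def cweight_eq_bernoulli_weight
    by (rule bernoulli_lower_tail) (use assms in \<open>fastforce simp: universe_def\<close>)+
  also have "\<dots> \<le> real k * q"
    using \<open>0 < q\<close> assms(1) by simp
  also have "\<dots> \<le> real k * q / (1 - q)"
    using \<open>0 < q\<close> \<open>q < 1\<close> by (simp add: le_divide_eq mult_left_le)
  finally show ?thesis
    unfolding q_def[symmetric]
    by (intro order_trans[OF consideration_prob_le[OF assms(1-3,6), of u]] mult_left_mono add_left_mono)
       (simp_all add: divide_nonneg_pos sum_nonneg)
qed

end
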